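(* Let $\mathsf{CS}$ be a constant specification for $\mathsf{LPC}^{int}$. For every set of formulas $T$ and formula $\phi$: if $T\models_{\mathsf{LPC}^{int}_{\mathsf{CS}}}\phi$, then $T\vdash_{\mathsf{LPC}^{int}_{\mathsf{CS}}}\phi$.
   Context: Language of $\mathsf{LPC}^{int}$: countable sets $\mathsf{Const}$, $\mathsf{Var}$, $\mathsf{Prop}$; terms and formulas defined by mutual recursion: $t ::= c \mid x \mid t\cdot t \mid t+t \mid\ !t \mid \langle t,\phi\rangle$ and $\phi ::= p \mid \neg\phi \mid \phi\wedge\phi \mid \phi\supset\phi \mid \phi>\phi \mid t{:}\phi$; $\mathsf{Tm},\mathsf{Fm}$ the sets of terms and formulas. Axiom schemes: (A1) all instances of classical tautologies; (A2) $(\phi>(\psi\supset\chi))\supset((\phi>\psi)\supset(\phi>\chi))$; (A3) $\phi>\phi$; (A4) $(\phi>\psi)\supset(\phi\supset\psi)$; (A5) $(s{:}(\phi>\psi)\wedge t{:}\phi) > (s\cdot t){:}\psi$; (A6) $s{:}\phi > (s+t){:}\phi$; (A7) $t{:}\phi>(s+t){:}\phi$; (A8) $t{:}\phi>\phi$; (A9) $t{:}\phi > (!t){:}t{:}\phi$; (A10) $t{:}\psi\supset\langle t,\phi\rangle{:}(\phi>\psi)$. A constant specification $\mathsf{CS}$ is a set of $c{:}\phi$ with $c\in\mathsf{Const}$, $\phi$ an instance of (A1)–(A10). $\mathsf{LPC}^{int}_{\mathsf{CS}}$: axioms (A1)–(A10) and $\mathsf{CS}$; rules (MP) from $\phi,\phi\supset\psi$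 infer $\psi$, and (RCN) from $\psi$ infer $\phi>\psi$. $T\vdash\phi$ iff $\vdash(\psi_1\wedge\cdots\wedge\psi_n)\supset\phi$ for some $\psi_1,\dots,\psi_n\in T$, $n\ge0$. Relational models $\mathcal M=(W,W_N,R_{Fm},R_{Tm},V)$: $W$ nonempty, $W_N\subseteq W$ nonempty (normal states); $R_\phi\subseteq W_N\times W_N$ for each formula; $R_t\subseteq W\times W$ for each term; $V(w)\subseteq\mathsf{Prop}$ for $w\in W_N$, $V(w)\subseteq\mathsf{Fm}$ for $w\in W\setminus W_N$. Truth: at non-normal $w$, $w\models\phi$ iff $\phi\in V(w)$; at normal $w$: $p$ iff $p\in V(w)$, $\neg,\wedge,\supset$ classical, $\phi>\psi$ iff $R_\phi(w)\subseteq[\psi]$, $t{:}\phi$ iff $R_t(w)\subseteq[\phi]$, with $[\phi]=\{w\in W:w\models\phi\}$. An $\mathsf{LPC}^{int}_{\mathsf{CS}}$-model is a relational model such that for all $w\in W_N$: (1) $R_\phi(w)\subseteq[\phi]$; (2) if $w\in[\phi]$ then $w\in R_\phi(w)$; (3) $R_c(w)\subseteq[\phi]$ for each $c{:}\phi\in\mathsf{CS}$; (4) $R_{s+t}(w)\subseteq R_s(w)\cap R_t(w)$; (5) for all $v\in R_{s\cdot t}(w)$, all $\phi,\psi$: if $w\in[s{:}(\phi>\psi)\wedge t{:}\phi]$ then $v\in[\psi]$; (6) $wR_tw$; (7) for $v,u\in W$, if $wR_{!t}v$ and $vR_tu$ then $wR_tu$; (8) for all $v\in W$, $\phi,\psi$,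 $t$: if $w\in[t{:}\psi]$ and $wR_{\langle t,\phi\rangle}v$ then $v\in[\phi>\psi]$. $T\models_{\mathsf{LPC}^{int}_{\mathsf{CS}}}\phi$ iff for every such model and every $w\in W_N$ at which all members of $T$ are true, $\phi$ is true at $w$. *)

theory Defs
  imports Main "HOL-Library.Countable"
begin

datatype ('c, 'v, 'p) tm =
    Const 'c
  | TVar 'v
  | App "('c, 'v, 'p) tm" "('c, 'v, 'p) tm"
  | Plus "('c, 'v, 'p) tm" "('c, 'v, 'p) tm"
  | Bang "('c, 'v, 'p) tm"
  | TPair "('c, 'v, 'p) tm" "('c, 'v, 'p) fm"
and ('c, 'v, 'p) fm =
    Atom 'p
  | Neg "('c, 'v, 'p) fm"
  | And "('c, 'v, 'p) fm" "('c, 'v, 'p) fm"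
  | Imp "('c, 'v, 'p) fm" "('c, 'v, 'p) fm"
  | Cond "('c, 'v, 'p) fm" "('c, 'v, 'p) fm"     (* phi > psi *)
  | Just "('c, 'v, 'p) tm" "('c, 'v, 'p) fm"

text \<open>Classical truth-functional evaluation, treating every formula whose main
connective is not a Boolean connective (atoms, conditionals, justification
formulas) as a propositional atom.  An instance of a classical tautology is a
formula true under every such valuation.\<close>

fun tval :: "(('c, 'v, 'p) fm \<Rightarrow> bool) \<Rightarrow> ('c, 'v, 'p) fm \<Rightarrow> bool" where
  "tval v (Atom p) = v (Atom p)"
| "tval v (Neg a) = (\<not> tval v a)"
| "tval v (And a b) = (tval v a \<and> tval v b)"
| "tval v (Imp a b) = (tval v a \<longrightarrow> tval v b)"
| "tval v (Cond a b) = v (Cond a b)"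
| "tval v (Just t a) = v (Just t a)"

definition taut_inst :: "('c, 'v, 'p) fm \<Rightarrow> bool" where
  "taut_inst \<phi> \<longleftrightarrow> (\<forall>v. tval v \<phi>)"

inductive is_axiom :: "('c, 'v, 'p) fm \<Rightarrow> bool" where
  A1: "taut_inst \<phi> \<Longrightarrow> is_axiom \<phi>"
| A2: "is_axiom (Imp (Cond \<phi> (Imp \<psi> \<chi>)) (Imp (Cond \<phi> \<psi>) (Cond \<phi> \<chi>)))"
| A3: "is_axiom (Cond \<phi> \<phi>)"
| A4: "is_axiom (Imp (Cond \<phi> \<psi>) (Imp \<phi> \<psi>))"
| A5: "is_axiom (Cond (And (Just s (Cond \<phi> \<psi>)) (Just t \<phi>)) (Just (App s t) \<psi>))"
| A6: "is_axiom (Cond (Just s \<phi>) (Just (Plus s t) \<phi>))"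
| A7: "is_axiom (Cond (Just t \<phi>) (Just (Plus s t) \<phi>))"
| A8: "is_axiom (Cond (Just t \<phi>) \<phi>)"
| A9: "is_axiom (Cond (Just t \<phi>) (Just (Bang t) (Just t \<phi>)))"
| A10: "is_axiom (Imp (Just t \<psi>) (Just (TPair t \<phi>) (Cond \<phi> \<psi>)))"

definition const_spec :: "('c, 'v, 'p) fm set \<Rightarrow> bool" where
  "const_spec CS \<longleftrightarrow> (\<forall>x\<in>CS. \<exists>c \<phi>. x = Just (Const c) \<phi> \<and> is_axiom \<phi>)"

inductive derivable :: "('c, 'v, 'p) fm set \<Rightarrow> ('c, 'v, 'p) fm \<Rightarrow> bool" for CS where
  Ax: "is_axiom \<phi> \<Longrightarrow> derivable CS \<phi>"
| CSax: "\<phi> \<in> CS \<Longrightarrow> derivable CS \<phi>"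
| MP: "derivable CS \<phi> \<Longrightarrow> derivable CS (Imp \<phi> \<psi>) \<Longrightarrow> derivable CS \<psi>"
| RCN: "derivable CS \<psi> \<Longrightarrow> derivable CS (Cond \<phi> \<psi>)"

fun conjs :: "('c, 'v, 'p) fm list \<Rightarrow> ('c, 'v, 'p) fm" where
  "conjs [] = Neg (Imp (Atom undefined) (Atom undefined))"
| "conjs [\<psi>] = \<psi>"
| "conjs (\<psi> # \<psi>s) = And \<psi> (conjs \<psi>s)"

definition derives :: "('c, 'v, 'p) fm set \<Rightarrow> ('c, 'v, 'p) fm set \<Rightarrow> ('c, 'v, 'p) fm \<Rightarrow> bool" where
  "derives CS T \<phi> \<longleftrightarrow>
     derivable CS \<phi> \<or> (\<exists>\<psi>s. \<psi>s \<noteq> [] \<and> set \<psi>s \<subseteq> T \<and> derivable CS (Imp (conjs \<psi>s) \<phi>))"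

text \<open>The valuation V is split into VN (used at normal states, V(w) a set of
propositional letters) and VX (used at non-normal states, V(w) a set of formulas).\<close>
record ('w, 'c, 'v, 'p) rmodel =
  W  :: "'w set"
  WN :: "'w set"
  RF :: "('c, 'v, 'p) fm \<Rightarrow> ('w \<times> 'w) set"
  RT :: "('c, 'v, 'p) tm \<Rightarrow> ('w \<times> 'w) set"
  VN :: "'w \<Rightarrow> 'p set"
  VX :: "'w \<Rightarrow> ('c, 'v, 'p) fm set"

definition rel_model :: "('w, 'c, 'v, 'p) rmodel \<Rightarrow> bool" where
  "rel_model M \<longleftrightarrow> W M \<noteq> {} \<and> WN M \<subseteq> W M \<and> WN M \<noteq> {}
     \<and> (\<forall>\<phi>. RF M \<phi> \<subseteq> WN M \<times> WN M) \<and> (\<forall>t. RT M t \<subseteq> W M \<times> W M)"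

fun sat :: "('w, 'c, 'v, 'p) rmodel \<Rightarrow> 'w \<Rightarrow> ('c, 'v, 'p) fm \<Rightarrow> bool" where
  "sat M w (Atom p) = (if w \<in> WN M then p \<in> VN M w else Atom p \<in> VX M w)"
| "sat M w (Neg a) = (if w \<in> WN M then \<not> sat M w a else Neg a \<in> VX M w)"
| "sat M w (And a b) = (if w \<in> WN M then sat M w a \<and> sat M w b else And a b \<in> VX M w)"
| "sat M w (Imp a b) = (if w \<in> WN M then (sat M w a \<longrightarrow> sat M w b) else Imp a b \<in> VX M w)"
| "sat M w (Cond a b) = (if w \<in> WN M then (\<forall>v. (w, v) \<in> RF M a \<longrightarrow> v \<in> W M \<and> sat M v b)
                          else Cond a b \<in> VX M w)"
| "sat M w (Just t a) = (if w \<in> WN M then (\<forall>v. (w, v) \<in> RT M t \<longrightarrow> v \<in> W M \<and> sat M v a)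
                          else Just t a \<in> VX M w)"

definition ext :: "('w, 'c, 'v, 'p) rmodel \<Rightarrow> ('c, 'v, 'p) fm \<Rightarrow> 'w set" where
  "ext M \<phi> = {w \<in> W M. sat M w \<phi>}"

definition succs :: "('w \<times> 'w) set \<Rightarrow> 'w \<Rightarrow> 'w set" where
  "succs R w = {v. (w, v) \<in> R}"

definition lpc_model :: "('c, 'v, 'p) fm set \<Rightarrow> ('w, 'c, 'v, 'p) rmodel \<Rightarrow> bool" where
  "lpc_model CS M \<longleftrightarrow> rel_model M \<and> (\<forall>w \<in> WN M.
      (\<forall>\<phi>. succs (RF M \<phi>) w \<subseteq> ext M \<phi>)
    \<and> (\<forall>\<phi>. w \<in> ext M \<phi> \<longrightarrow> w \<in> succs (RF M \<phi>) w)
    \<and> (\<forall>c \<phi>. Just (Const c) \<phi> \<in> CS \<longrightarrow> succs (RT M (Const c)) w \<subseteq> ext M \<phi>)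
    \<and> (\<forall>s t. succs (RT M (Plus s t)) w \<subseteq> succs (RT M s) w \<inter> succs (RT M t) w)
    \<and> (\<forall>s t. \<forall>v \<in> succs (RT M (App s t)) w. \<forall>\<phi> \<psi>.
          w \<in> ext M (And (Just s (Cond \<phi> \<psi>)) (Just t \<phi>)) \<longrightarrow> v \<in> ext M \<psi>)
    \<and> (\<forall>t. (w, w) \<in> RT M t)
    \<and> (\<forall>t. \<forall>v \<in> W M. \<forall>u \<in> W M. (w, v) \<in> RT M (Bang t) \<and> (v, u) \<in> RT M t \<longrightarrow> (w, u) \<in> RT M t)
    \<and> (\<forall>v \<in> W M. \<forall>\<phi> \<psi> t. w \<in> ext M (Just t \<psi>) \<and> (w, v) \<in> RT M (TPair t \<phi>)
          \<longrightarrow> v \<in> ext M (Cond \<phi> \<psi>)))"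

definition entails :: "('c, 'v, 'p) fm set \<Rightarrow> ('c, 'v, 'p) fm set \<Rightarrow> ('c, 'v, 'p) fm \<Rightarrow> bool" where
  "entails CS T \<phi> \<longleftrightarrow>
     (\<forall>M :: (('c, 'v, 'p) fm set set, 'c, 'v, 'p) rmodel. lpc_model CS M \<longrightarrow>
        (\<forall>w \<in> WN M. (\<forall>\<psi> \<in> T. sat M w \<psi>) \<longrightarrow> sat M w \<phi>))"

end

theory Submission
  imports Defs
begin

(* Strong completeness by a canonical model.  If T does not derive \<phi>, then T with \<not>\<phi> is
   consistent and, by Zorn's lemma, extends to a maximal consistent set G.  In the canonical
   model a world w stands for the formula set \<Union>w: the normal worlds are the singletons {G}
   of maximal consistent sets, every other set of formula sets is a non-normal world, which
   verifies exactly the formulas in its union.  Conditionals are evaluated Chellas-style,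
   a > b holding at G iff b lies in every maximal consistent D containing a and all
   consequents of a > \<chi> in G; A2, A3 and RCN provide such a D whenever a > b \<notin> G.
   A justification t reaches from a normal world only itself and non-normal worlds whose
   union contains all formulas justified by t, so the frame conditions reduce to A5-A10,
   and a truth lemma sat w a \<longleftrightarrow> a \<in> \<Union>w makes {G} a countermodel. *)

definition falsum :: "('c, 'v, 'p) fm" where
  "falsum = Neg (Imp (Atom undefined) (Atom undefined))"

fun imps :: "('c, 'v, 'p) fm list \<Rightarrow> ('c, 'v, 'p) fm \<Rightarrow> ('c, 'v, 'p) fm" where
  "imps [] b = b"
| "imps (a # as) b = Imp a (imps as b)"

lemma tval_imps [simp]: "tval v (imps as b) \<longleftrightarrow> ((\<forall>a\<in>set as. tval v a) \<longrightarrow> tval v b)"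
  by (induction as) auto

lemma tval_falsum [simp]: "\<not> tval v falsum"
  by (simp add: falsum_def)

lemma tval_conjs: "as \<noteq> [] \<Longrightarrow> tval v (conjs as) \<longleftrightarrow> (\<forall>a\<in>set as. tval v a)"
  by (induction as rule: conjs.induct) auto

lemma derivable_taut: "(\<And>v. tval v a) \<Longrightarrow> derivable CS a"
  by (simp add: derivable.Ax is_axiom.A1 taut_inst_def)

lemma derivable_imps_MP:
  "derivable CS (imps as b) \<Longrightarrow> \<forall>a\<in>set as. derivable CS a \<Longrightarrow> derivable CS b"
  by (induction as) (auto intro: derivable.MP)

lemma derivable_tautological_consequence:
  assumes "\<forall>a\<in>set as. derivable CS a" and "\<And>v. \<forall>a\<in>set as. tval v a \<Longrightarrow> tval v b"
  shows "derivable CS b"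
  using derivable_imps_MP[OF derivable_taut assms(1)] assms(2) by simp

definition consistent :: "('c, 'v, 'p) fm set \<Rightarrow> ('c, 'v, 'p) fm set \<Rightarrow> bool" where
  "consistent CS S \<longleftrightarrow> (\<forall>as. set as \<subseteq> S \<longrightarrow> \<not> derivable CS (imps as falsum))"

lemma consistentD: "consistent CS S \<Longrightarrow> set as \<subseteq> S \<Longrightarrow> \<not> derivable CS (imps as falsum)"
  by (simp add: consistent_def)

definition mcs :: "('c, 'v, 'p) fm set \<Rightarrow> ('c, 'v, 'p) fm set \<Rightarrow> bool" where
  "mcs CS G \<longleftrightarrow> consistent CS G \<and> (\<forall>\<psi>. \<psi> \<in> G \<or> Neg \<psi> \<in> G)"

lemma consistent_insert_or_insert_Neg:
  assumes "consistent CS S"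
  shows "consistent CS (insert \<psi> S) \<or> consistent CS (insert (Neg \<psi>) S)"
proof (rule ccontr)
  assume "\<not> ?thesis"
  then obtain as bs where as: "set as \<subseteq> insert \<psi> S" "derivable CS (imps as falsum)"
    and bs: "set bs \<subseteq> insert (Neg \<psi>) S" "derivable CS (imps bs falsum)"
    by (auto simp: consistent_def)
  let ?cs = "filter (\<lambda>a. a \<in> S) (as @ bs)"
  have "derivable CS (imps ?cs falsum)"
  proof (rule derivable_tautological_consequence[of "[imps as falsum, imps bs falsum]"])
    fix v assume "\<forall>a\<in>set [imps as falsum, imps bs falsum]. tval v a"
    then obtain a b where "a \<in> set as" "\<not> tval v a" "b \<in> set bs" "\<not> tval v b"
      by auto
    moreover have "a \<in> S \<or> b \<in> S"
    proof (rule ccontr)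
      assume "\<not> (a \<in> S \<or> b \<in> S)"
      then have "a = \<psi>" "b = Neg \<psi>"
        using as(1) bs(1) \<open>a \<in> set as\<close> \<open>b \<in> set bs\<close> by auto
      then show False
        using \<open>\<not> tval v a\<close> \<open>\<not> tval v b\<close> by simp
    qed
    ultimately have "a \<in> set ?cs \<or> b \<in> set ?cs"
      by auto
    then show "tval v (imps ?cs falsum)"
      using \<open>\<not> tval v a\<close> \<open>\<not> tval v b\<close> by auto
  qed (use as bs in simp)
  moreover have "set ?cs \<subseteq> S" by auto
  ultimately show False
    using consistentD[OF assms] by blast
qed

lemma consistent_Union_chain:
  assumes "C \<in> chains A" "C \<noteq> {}" "\<forall>X\<in>C. consistent CS X"
  shows "consistent CS (\<Union>C)"
  unfolding consistent_def
proof (intro allI impI)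
  fix as assume as: "set as \<subseteq> \<Union>C"
  have "subset.chain A C"
    using assms(1) by (simp add: chains_alt_def)
  then obtain X where "X \<in> C" "set as \<subseteq> X"
    using finite_subset_Union_chain[OF finite_set as assms(2)] by blast
  then show "\<not> derivable CS (imps as falsum)"
    using assms(3) by (auto simp: consistent_def)
qed

lemma lindenbaum:
  assumes "consistent CS S"
  obtains G where "S \<subseteq> G" "mcs CS G"
proof -
  let ?A = "{X. S \<subseteq> X \<and> consistent CS X}"
  have "\<exists>U\<in>?A. \<forall>X\<in>C. X \<subseteq> U" if C: "C \<in> chains ?A" for C
  proof (cases "C = {}")
    case True
    then show ?thesis using assms by auto
  next
    case False
    have "\<forall>X\<in>C. S \<subseteq> X \<and> consistent CS X"
      using chainsD2[OF C] by blast
    then have "\<Union>C \<in> ?A"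
      using consistent_Union_chain[OF C False] False by blast
    then show ?thesis by blast
  qed
  from Zorn_Lemma2[OF ballI, OF this] obtain G
    where G: "G \<in> ?A" and max: "\<forall>X\<in>?A. G \<subseteq> X \<longrightarrow> X = G"
    by blast
  have "\<psi> \<in> G \<or> Neg \<psi> \<in> G" for \<psi>
  proof -
    consider "insert \<psi> G \<in> ?A" | "insert (Neg \<psi>) G \<in> ?A"
      using consistent_insert_or_insert_Neg[of CS G \<psi>] G by auto
    then show ?thesis
    proof cases
      case 1
      then have "insert \<psi> G = G" using max by blast
      then show ?thesis by blast
    next
      case 2
      then have "insert (Neg \<psi>) G = G" using max by blast
      then show ?thesis by blast
    qed
  qed
  then have "mcs CS G"
    using G by (simp add: mcs_def)
  with G show ?thesis
    using that by blast
qed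

lemma mcs_derivable_imps:
  assumes "mcs CS G" "set as \<subseteq> G" "derivable CS (imps as b)"
  shows "b \<in> G"
proof (rule ccontr)
  assume "b \<notin> G"
  then have "set (Neg b # as) \<subseteq> G"
    using assms(1,2) by (auto simp: mcs_def)
  moreover have "derivable CS (imps (Neg b # as) falsum)"
    by (rule derivable_tautological_consequence[of "[imps as b]"]) (use assms(3) in auto)
  ultimately show False
    using assms(1) consistentD unfolding mcs_def by blast
qed

lemma mcs_derivable: "mcs CS G \<Longrightarrow> derivable CS a \<Longrightarrow> a \<in> G"
  using mcs_derivable_imps[of CS G "[]"] by simp

lemma mcs_axiom: "mcs CS G \<Longrightarrow> is_axiom a \<Longrightarrow> a \<in> G"
  by (simp add: derivable.Ax mcs_derivable)

lemma mcs_tautological_consequence: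
  assumes "mcs CS G" "set as \<subseteq> G" "\<And>v. \<forall>a\<in>set as. tval v a \<Longrightarrow> tval v b"
  shows "b \<in> G"
  using assms(1,2) by (rule mcs_derivable_imps) (use assms(3) in \<open>auto intro: derivable_taut\<close>)

lemma mcs_falsum: "mcs CS G \<Longrightarrow> falsum \<notin> G"
  using consistentD[of CS G "[falsum]"] derivable_taut[of "imps [falsum] falsum" CS]
  by (auto simp: mcs_def)

lemma mcs_Neg: "mcs CS G \<Longrightarrow> Neg a \<in> G \<longleftrightarrow> a \<notin> G"
  using mcs_tautological_consequence[of CS G "[a, Neg a]" falsum] mcs_falsum
  by (auto simp: mcs_def)

lemma mcs_And:
  assumes "mcs CS G"
  shows "And a b \<in> G \<longleftrightarrow> a \<in> G \<and> b \<in> G"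
proof
  assume "And a b \<in> G"
  then show "a \<in> G \<and> b \<in> G"
    using mcs_tautological_consequence[OF assms, of "[And a b]" a]
      mcs_tautological_consequence[OF assms, of "[And a b]" b] by simp
next
  assume "a \<in> G \<and> b \<in> G"
  then show "And a b \<in> G"
    using mcs_tautological_consequence[OF assms, of "[a, b]" "And a b"] by simp
qed

lemma mcs_Imp:
  assumes "mcs CS G"
  shows "Imp a b \<in> G \<longleftrightarrow> (a \<in> G \<longrightarrow> b \<in> G)"
proof
  assume "Imp a b \<in> G"
  then show "a \<in> G \<longrightarrow> b \<in> G"
    using mcs_tautological_consequence[OF assms, of "[Imp a b, a]" b] by simp
next
  assume "a \<in> G \<longrightarrow> b \<in> G"
  then have "b \<in> G \<or> Neg a \<in> G"
    using mcs_Neg[OF assms] by blast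
  then show "Imp a b \<in> G"
    using mcs_tautological_consequence[OF assms, of "[b]" "Imp a b"]
      mcs_tautological_consequence[OF assms, of "[Neg a]" "Imp a b"] by auto
qed

lemma mcs_Cond_MP: "mcs CS G \<Longrightarrow> Cond a b \<in> G \<Longrightarrow> a \<in> G \<Longrightarrow> b \<in> G"
  by (meson is_axiom.A4 mcs_axiom mcs_Imp)

lemma mcs_Just_factive: "mcs CS G \<Longrightarrow> Just t a \<in> G \<Longrightarrow> a \<in> G"
  by (meson is_axiom.A8 mcs_axiom mcs_Cond_MP)

lemma mcs_Cond_imps:
  assumes "mcs CS G"
  shows "Cond a (imps bs c) \<in> G \<Longrightarrow> \<forall>b\<in>set bs. Cond a b \<in> G \<Longrightarrow> Cond a c \<in> G"
proof (induction bs)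
  case (Cons b bs)
  have "Imp (Cond a (Imp b (imps bs c))) (Imp (Cond a b) (Cond a (imps bs c))) \<in> G"
    using assms is_axiom.A2 by (rule mcs_axiom)
  then have "Cond a (imps bs c) \<in> G"
    using Cons.prems mcs_Imp[OF assms] by simp
  then show ?case
    using Cons by simp
qed simp

lemma mcs_Cond_witness:
  assumes "mcs CS G" "Cond a b \<notin> G"
  obtains D where "mcs CS D" "a \<in> D" "\<forall>\<chi>. Cond a \<chi> \<in> G \<longrightarrow> \<chi> \<in> D" "b \<notin> D"
proof -
  let ?S = "{a, Neg b} \<union> {\<chi>. Cond a \<chi> \<in> G}"
  have "consistent CS ?S"
    unfolding consistent_def
  proof (intro allI impI notI)
    fix as assume as: "set as \<subseteq> ?S" and inconsistent: "derivable CS (imps as falsum)"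
    let ?bs = "filter (\<lambda>\<chi>. Cond a \<chi> \<in> G) as"
    have "derivable CS (Imp a (imps ?bs b))"
    proof (rule derivable_tautological_consequence[of "[imps as falsum]"])
      fix v assume "\<forall>c\<in>set [imps as falsum]. tval v c"
      then obtain c where "c \<in> set as" "\<not> tval v c"
        by auto
      then show "tval v (Imp a (imps ?bs b))"
        using as by auto
    qed (use inconsistent in simp)
    then have "Cond a (Imp a (imps ?bs b)) \<in> G"
      using assms(1) derivable.RCN mcs_derivable by blast
    moreover have "Imp (Cond a (Imp a (imps ?bs b))) (Imp (Cond a a) (Cond a (imps ?bs b))) \<in> G"
      using assms(1) is_axiom.A2 by (rule mcs_axiom)
    moreover have "Cond a a \<in> G"
      using assms(1) is_axiom.A3 by (rule mcs_axiom)
    ultimately have "Cond a (imps ?bs b) \<in> G"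
      using mcs_Imp[OF assms(1)] by blast
    then have "Cond a b \<in> G"
      using mcs_Cond_imps[OF assms(1)] by simp
    then show False
      using assms(2) by blast
  qed
  then obtain D where "?S \<subseteq> D" "mcs CS D"
    by (rule lindenbaum)
  then show ?thesis
    using that mcs_Neg by blast
qed

definition normal_world :: "('c, 'v, 'p) fm set \<Rightarrow> ('c, 'v, 'p) fm set set \<Rightarrow> bool" where
  "normal_world CS w \<longleftrightarrow> (\<exists>G. mcs CS G \<and> w = {G})"

definition canonical_model :: "('c, 'v, 'p) fm set \<Rightarrow> (('c, 'v, 'p) fm set set, 'c, 'v, 'p) rmodel" where
  "canonical_model CS = \<lparr>
     W = UNIV,
     WN = {w. normal_world CS w},
     RF = (\<lambda>a. {({G}, {D}) | G D. mcs CS G \<and> mcs CS D \<and> a \<in> D \<and> (\<forall>\<chi>. Cond a \<chi> \<in> G \<longrightarrow> \<chi> \<in> D)}),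
     RT = (\<lambda>t. {(w, u). normal_world CS w \<and>
                 (u = w \<or> \<not> normal_world CS u \<and> (\<forall>a. Just t a \<in> \<Union>w \<longrightarrow> a \<in> \<Union>u))}),
     VN = (\<lambda>w. {p. Atom p \<in> \<Union>w}),
     VX = (\<lambda>w. \<Union>w) \<rparr>"

lemma canonical_model_simps [simp]:
  "W (canonical_model CS) = UNIV"
  "WN (canonical_model CS) = {w. normal_world CS w}"
  "VN (canonical_model CS) = (\<lambda>w. {p. Atom p \<in> \<Union>w})"
  "VX (canonical_model CS) = (\<lambda>w. \<Union>w)"
  by (simp_all add: canonical_model_def)

lemma RF_canonical_model:
  "mcs CS G \<Longrightarrow> ({G}, u) \<in> RF (canonical_model CS) a \<longleftrightarrow>
     (\<exists>D. u = {D} \<and> mcs CS D \<and> a \<in> D \<and> (\<forall>\<chi>. Cond a \<chi> \<in> G \<longrightarrow> \<chi> \<in> D))"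
  by (auto simp: canonical_model_def)

lemma RT_canonical_model:
  "(w, u) \<in> RT (canonical_model CS) t \<longleftrightarrow> normal_world CS w \<and>
     (u = w \<or> \<not> normal_world CS u \<and> (\<forall>a. Just t a \<in> \<Union>w \<longrightarrow> a \<in> \<Union>u))"
  by (simp add: canonical_model_def)

lemma RT_canonical_model_Just:
  assumes "mcs CS G" "({G}, u) \<in> RT (canonical_model CS) t" "Just t a \<in> G"
  shows "a \<in> \<Union>u"
proof -
  have "u = {G} \<or> (\<forall>a. Just t a \<in> G \<longrightarrow> a \<in> \<Union>u)"
    using assms(2) unfolding RT_canonical_model by blast
  then show ?thesis
    using assms(3) mcs_Just_factive[OF assms(1,3)] by auto
qed

lemma mcs_nonempty: "mcs CS G \<Longrightarrow> G \<noteq> {}"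
  unfolding mcs_def by blast

lemma mcs_Union_normal_world: "normal_world CS w \<Longrightarrow> mcs CS (\<Union>w)"
  by (auto simp: normal_world_def)

lemma sat_canonical_model: "sat (canonical_model CS) w a \<longleftrightarrow> a \<in> \<Union>w"
proof (induction a arbitrary: w rule: fm.induct[where ?P1.0 = "\<lambda>_. True"])
  case (Neg a)
  then show ?case
    by (cases "normal_world CS w") (simp_all add: mcs_Neg[OF mcs_Union_normal_world] del: Union_iff)
next
  case (And a b)
  then show ?case
    by (cases "normal_world CS w") (simp_all add: mcs_And[OF mcs_Union_normal_world] del: Union_iff)
next
  case (Imp a b)
  then show ?case
    by (cases "normal_world CS w") (simp_all add: mcs_Imp[OF mcs_Union_normal_world] del: Union_iff)
next
  case (Cond a b)
  show ?case
  proof (cases "normal_world CS w")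
    case True
    then obtain G where G: "mcs CS G" "w = {G}"
      by (auto simp: normal_world_def)
    have "sat (canonical_model CS) w (Cond a b) \<longleftrightarrow>
        (\<forall>D. mcs CS D \<and> a \<in> D \<and> (\<forall>\<chi>. Cond a \<chi> \<in> G \<longrightarrow> \<chi> \<in> D) \<longrightarrow> b \<in> D)"
      using True G Cond.IH(2) by (auto simp: RF_canonical_model)
    also have "\<dots> \<longleftrightarrow> Cond a b \<in> G"
      using mcs_Cond_witness[OF G(1)] by blast
    finally show ?thesis
      using G by simp
  qed simp
next
  case (Just t a)
  show ?case
  proof (cases "normal_world CS w")
    case True
    then obtain G where G: "mcs CS G" "w = {G}"
      by (auto simp: normal_world_def)
    have "sat (canonical_model CS) w (Just t a) \<longleftrightarrow>
        (\<forall>u. ({G}, u) \<in> RT (canonical_model CS) t \<longrightarrow> a \<in> \<Union>u)"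
      using True G Just.IH by simp
    also have "\<dots> \<longleftrightarrow> Just t a \<in> G"
    proof
      assume all: "\<forall>u. ({G}, u) \<in> RT (canonical_model CS) t \<longrightarrow> a \<in> \<Union>u"
      let ?u = "{{a. Just t a \<in> G}, {}}"
      have "\<not> normal_world CS ?u"
        using mcs_nonempty by (force simp: normal_world_def)
      then have "({G}, ?u) \<in> RT (canonical_model CS) t"
        using G by (auto simp: RT_canonical_model normal_world_def)
      then show "Just t a \<in> G"
        using all by blast
    qed (use G RT_canonical_model_Just in blast)
    finally show ?thesis
      using G by simp
  qed simp
qed simp_all

lemma ext_canonical_model: "ext (canonical_model CS) a = {w. a \<in> \<Union>w}"
  by (simp add: ext_def sat_canonical_model)

lemma rel_model_canonical_model:
  assumes "mcs CS G"
  shows "rel_model (canonical_model CS)"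
proof -
  have "{G} \<in> WN (canonical_model CS)"
    using assms by (simp add: normal_world_def)
  moreover have "RF (canonical_model CS) a \<subseteq> WN (canonical_model CS) \<times> WN (canonical_model CS)" for a
    by (auto simp: canonical_model_def normal_world_def)
  ultimately show ?thesis
    by (auto simp: rel_model_def)
qed

lemma lpc_model_canonical_model:
  assumes "mcs CS G0"
  shows "lpc_model CS (canonical_model CS)"
  unfolding lpc_model_def
proof (intro conjI ballI)
  show "rel_model (canonical_model CS)"
    using assms by (rule rel_model_canonical_model)
next
  fix w assume "w \<in> WN (canonical_model CS)"
  then obtain G where G: "mcs CS G" "w = {G}"
    by (auto simp: normal_world_def)
  note succ_Just = RT_canonical_model_Just[OF G(1), folded G(2)]
  show "\<forall>a. succs (RF (canonical_model CS) a) w \<subseteq> ext (canonical_model CS) a"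
    using G by (auto simp: succs_def ext_canonical_model RF_canonical_model)
  show "\<forall>a. w \<in> ext (canonical_model CS) a \<longrightarrow> w \<in> succs (RF (canonical_model CS) a) w"
    using G mcs_Cond_MP[OF G(1)] by (auto simp: succs_def ext_canonical_model RF_canonical_model)
  show "\<forall>c a. Just (Const c) a \<in> CS \<longrightarrow> succs (RT (canonical_model CS) (Const c)) w \<subseteq> ext (canonical_model CS) a"
    using succ_Just mcs_derivable[OF G(1) derivable.CSax]
    by (auto simp: succs_def ext_canonical_model)
  show "\<forall>s t. succs (RT (canonical_model CS) (Plus s t)) w
      \<subseteq> succs (RT (canonical_model CS) s) w \<inter> succs (RT (canonical_model CS) t) w"
    using G mcs_Cond_MP[OF G(1) mcs_axiom[OF G(1) is_axiom.A6]]
      mcs_Cond_MP[OF G(1) mcs_axiom[OF G(1) is_axiom.A7]]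
    by (auto simp: succs_def RT_canonical_model)
  show "\<forall>s t. \<forall>v\<in>succs (RT (canonical_model CS) (App s t)) w. \<forall>a b.
      w \<in> ext (canonical_model CS) (And (Just s (Cond a b)) (Just t a)) \<longrightarrow> v \<in> ext (canonical_model CS) b"
    using G succ_Just mcs_Cond_MP[OF G(1) mcs_axiom[OF G(1) is_axiom.A5]]
    by (auto simp: succs_def ext_canonical_model)
  show "\<forall>t. (w, w) \<in> RT (canonical_model CS) t"
    using G by (auto simp: RT_canonical_model normal_world_def)
  show "\<forall>t. \<forall>v\<in>W (canonical_model CS). \<forall>u\<in>W (canonical_model CS).
      (w, v) \<in> RT (canonical_model CS) (Bang t) \<and> (v, u) \<in> RT (canonical_model CS) t
        \<longrightarrow> (w, u) \<in> RT (canonical_model CS) t"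
    \<comment> \<open>v has an RT-successor, so it is normal and hence equal to w\<close>
    by (auto simp: RT_canonical_model)
  show "\<forall>a b t. w \<in> ext (canonical_model CS) (Just t b) \<and> (w, v) \<in> RT (canonical_model CS) (TPair t a)
      \<longrightarrow> v \<in> ext (canonical_model CS) (Cond a b)" for v
    using G succ_Just mcs_Imp[OF G(1)] mcs_axiom[OF G(1) is_axiom.A10]
    by (auto simp: ext_canonical_model)
qed

lemma consistent_insert_Neg_if_not_derives:
  assumes "\<not> derives CS T \<phi>"
  shows "consistent CS (insert (Neg \<phi>) T)"
  unfolding consistent_def
proof (intro allI impI notI)
  fix as assume as: "set as \<subseteq> insert (Neg \<phi>) T" and inconsistent: "derivable CS (imps as falsum)"
  let ?bs = "filter (\<lambda>a. a \<noteq> Neg \<phi>) as"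
  have tautology: "tval v \<phi>" if "tval v (imps as falsum)" "\<forall>b\<in>set ?bs. tval v b" for v
    using that by auto
  show False
  proof (cases "?bs = []")
    case True
    have "derivable CS \<phi>"
      by (rule derivable_tautological_consequence[of "[imps as falsum]"])
        (use inconsistent tautology True in auto)
    then show False
      using assms by (simp add: derives_def)
  next
    case False
    have "derivable CS (Imp (conjs ?bs) \<phi>)"
      by (rule derivable_tautological_consequence[of "[imps as falsum]"])
        (use inconsistent tautology tval_conjs[OF False] in auto)
    moreover have "set ?bs \<subseteq> T"
      using as by auto
    ultimately show False
      using assms False unfolding derives_def by blast
  qed
qed

theorem mainTheorem11:
  fixes CS :: "('c::countable, 'v::countable, 'p::countable) fm set"
    and T :: "('c, 'v, 'p) fm set"
    and \<phi> :: "('c, 'v, 'p) fm"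
  assumes "const_spec CS"
    and "entails CS T \<phi>"
  shows "derives CS T \<phi>"
proof (rule ccontr)
  assume "\<not> derives CS T \<phi>"
  then have "consistent CS (insert (Neg \<phi>) T)"
    by (rule consistent_insert_Neg_if_not_derives)
  then obtain G where G: "insert (Neg \<phi>) T \<subseteq> G" "mcs CS G"
    by (rule lindenbaum)
  have "lpc_model CS (canonical_model CS)"
    using G(2) by (rule lpc_model_canonical_model)
  moreover have "{G} \<in> WN (canonical_model CS)"
    using G(2) by (simp add: normal_world_def)
  moreover have "\<forall>\<psi>\<in>T. sat (canonical_model CS) {G} \<psi>"
    using G(1) by (auto simp: sat_canonical_model)
  ultimately have "sat (canonical_model CS) {G} \<phi>"
    using assms(2) unfolding entails_def by blast
  then show False
    using G mcs_Neg by (auto simp: sat_canonical_model)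
qed

end
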